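(* Let $E\in M_n(\mathbb{FT})$ be idempotent ($E\otimes E=E$), let $H_E$ be the $\mathcal{H}$-class of $E$ in $M_n(\mathbb{FT})$, and let $\mathrm{Aut}(C(E))$ be the group of $\mathbb{FT}$-module automorphisms of $C(E)$. Let $E_1,\dots,E_n$ denote the columns of $E$. Define $\psi:\mathrm{Aut}(C(E))\to H_E$ by $\psi(f)=(f(E_1)\ \cdots\ f(E_n))$, the matrix whose $i$th column is $f(E_i)$. Then $\psi$ is a well-defined isomorphism of groups (where $H_E$ is a group under tropical matrix multiplication). Dually, $H_E$ is isomorphic to the group of $\mathbb{FT}$-module automorphisms of $R(E)$.
   Context: $\mathbb{FT}$ is $\mathbb{R}$ with $a\oplus b=\max(a,b)$, $a\otimes b=a+b$. $M_n(\mathbb{FT})$ is the semigroup of real $n\times n$ matrices under $(A\otimes B)_{i,j}=\max_k(A_{i,k}+B_{k,j})$. $\mathbb{FT}^n$ is an $\mathbb{FT}$-module under componentwise maximum and scaling $(\lambda\otimes x)_i=\lambda+x_i$; an $\mathbb{FT}$-module automorphism is a bijection preserving $\oplus$ and scaling. $C(A)$ (resp. $R(A)$) is the submodule of $\mathbb{FT}^n$ generated by the columns (resp. rows) of $A$, i.e. the set of all finite $\oplus$-combinations of scalings of them. Green's relations on a semigroup $S$ (with $S^1$ being $S$ with an identity adjoined): $a\,\mathcal{R}\,b$ iff $aS^1=bS^1$, $a\,\mathcal{L}\,b$ iff $S^1a=S^1b$, and $\mathcal{H}=\mathcal{L}\cap\mathcal{R}$. The $\mathcal H$-class of an idempotent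 is a group. *)

theory Defs
  imports Complex_Main "HOL-Algebra.Group" "HOL-Library.FuncSet"
begin

type_synonym 'n tvec = "'n \<Rightarrow> real"
type_synonym 'n tmat = "'n \<Rightarrow> 'n \<Rightarrow> real"

definition tmult :: "'n::finite tmat \<Rightarrow> 'n tmat \<Rightarrow> 'n tmat" where
  "tmult A B = (\<lambda>i j. Max (range (\<lambda>k. A i k + B k j)))"

definition tplus :: "'n tvec \<Rightarrow> 'n tvec \<Rightarrow> 'n tvec" where
  "tplus x y = (\<lambda>i. max (x i) (y i))"

definition tscale :: "real \<Rightarrow> 'n tvec \<Rightarrow> 'n tvec" where
  "tscale c x = (\<lambda>i. c + x i)"

definition col :: "'n tmat \<Rightarrow> 'n \<Rightarrow> 'n tvec" where
  "col A j = (\<lambda>i. A i j)"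

definition row :: "'n tmat \<Rightarrow> 'n \<Rightarrow> 'n tvec" where
  "row A i = A i"

inductive_set tspan :: "'n tvec set \<Rightarrow> 'n tvec set" for S where
  gen: "x \<in> S \<Longrightarrow> tscale c x \<in> tspan S"
| sup: "x \<in> tspan S \<Longrightarrow> y \<in> tspan S \<Longrightarrow> tplus x y \<in> tspan S"

definition colspace :: "'n tmat \<Rightarrow> 'n tvec set" where
  "colspace A = tspan (range (col A))"

definition rowspace :: "'n tmat \<Rightarrow> 'n tvec set" where
  "rowspace A = tspan (range (row A))"

definition tAut :: "'n tvec set \<Rightarrow> ('n tvec \<Rightarrow> 'n tvec) set" where
  "tAut M = {f. f \<in> extensional M \<and> bij_betw f M M
      \<and> (\<forall>x\<in>M. \<forall>y\<in>M. f (tplus x y) = tplus (f x) (f y))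
      \<and> (\<forall>c. \<forall>x\<in>M. f (tscale c x) = tscale c (f x))}"

definition AutGroup :: "'n tvec set \<Rightarrow> ('n tvec \<Rightarrow> 'n tvec) monoid" where
  "AutGroup M = \<lparr>carrier = tAut M, mult = (\<lambda>f g. compose M f g), one = restrict id M\<rparr>"

text \<open>Green's relations in the semigroup M_n(FT) (with identity adjoined).\<close>
definition greenR :: "'n::finite tmat \<Rightarrow> 'n tmat \<Rightarrow> bool" where
  "greenR A B \<longleftrightarrow> (A = B \<or> (\<exists>X. A = tmult B X)) \<and> (B = A \<or> (\<exists>Y. B = tmult A Y))"

definition greenL :: "'n::finite tmat \<Rightarrow> 'n tmat \<Rightarrow> bool" where
  "greenL A B \<longleftrightarrow> (A = B \<or> (\<exists>X. A = tmult X B)) \<and> (B = A \<or> (\<exists>Y. B = tmult Y A))"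

definition greenH :: "'n::finite tmat \<Rightarrow> 'n tmat \<Rightarrow> bool" where
  "greenH A B \<longleftrightarrow> greenR A B \<and> greenL A B"

definition Hclass :: "'n::finite tmat \<Rightarrow> 'n tmat set" where
  "Hclass E = {A. greenH A E}"

definition HGroup :: "'n::finite tmat \<Rightarrow> 'n tmat monoid" where
  "HGroup E = \<lparr>carrier = Hclass E, mult = tmult, one = E\<rparr>"

definition psi :: "'n tmat \<Rightarrow> ('n tvec \<Rightarrow> 'n tvec) \<Rightarrow> 'n tmat" where
  "psi E f = (\<lambda>i j. f (col E j) i)"

end

theory Submission
  imports Defs "HOL-Algebra.Bij"
begin

text \<open>An idempotent \<open>E\<close> acts as the identity on its column space \<open>C(E)\<close>, so every
  \<open>x \<in> C(E)\<close> is the max-plus combination \<open>E x\<close> of the columns of \<open>E\<close> with coefficients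
  \<open>x\<close>. Hence a module endomorphism \<open>f\<close> of \<open>C(E)\<close> is left multiplication by
  \<open>\<psi>(f)\<close> on \<open>C(E)\<close>, and composition of endomorphisms becomes the matrix product.
  Automorphisms thus map to matrices with \<open>E \<psi>(f) = \<psi>(f) E = \<psi>(f)\<close> having one-sided
  inverses relative to \<open>E\<close>, which is exactly membership in the H-class of \<open>E\<close>;
  conversely left multiplication by such a matrix permutes \<open>C(E)\<close>. For rows, transposition
  turns \<open>R(E)\<close> into \<open>C(E\<^sup>T)\<close> and reverses products, and group inversion undoes the
  reversal.\<close>

section \<open>Max-plus matrix algebra\<close>

lemma Max_range_swap:
  fixes f :: "'a::finite \<Rightarrow> 'b::finite \<Rightarrow> 'c::linorder"
  shows "Max (range (\<lambda>k. Max (range (\<lambda>l. f k l)))) = Max (range (\<lambda>l. Max (range (\<lambda>k. f k l))))"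
proof -
  have le: "f k l \<le> Max (range (\<lambda>l. Max (range (\<lambda>k. f k l))))" for k l
  proof (rule order_trans)
    show "f k l \<le> Max (range (\<lambda>k. f k l))" by (rule Max_ge) auto
    show "Max (range (\<lambda>k. f k l)) \<le> Max (range (\<lambda>l. Max (range (\<lambda>k. f k l))))"
      by (rule Max_ge) auto
  qed
  have ge: "f k l \<le> Max (range (\<lambda>k. Max (range (\<lambda>l. f k l))))" for k l
  proof (rule order_trans)
    show "f k l \<le> Max (range (\<lambda>l. f k l))" by (rule Max_ge) auto
    show "Max (range (\<lambda>l. f k l)) \<le> Max (range (\<lambda>k. Max (range (\<lambda>l. f k l))))"
      by (rule Max_ge) auto
  qed
  show ?thesis
    by (rule antisym) (simp_all add: Max_le_iff le ge)
qed

lemma Max_range_add_left: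
  fixes f :: "'a::finite \<Rightarrow> real"
  shows "c + Max (range f) = Max (range (\<lambda>k. c + f k))"
  using Max_add_commute[of UNIV f c] by (simp add: add.commute)

lemma Max_range_add_right:
  fixes f :: "'a::finite \<Rightarrow> real"
  shows "Max (range f) + c = Max (range (\<lambda>k. f k + c))"
  using Max_add_commute[of UNIV f c] by simp

lemma Max_range_max:
  fixes f g :: "'a::finite \<Rightarrow> 'b::linorder"
  shows "Max (range (\<lambda>k. max (f k) (g k))) = max (Max (range f)) (Max (range g))"
proof (rule antisym)
  have "f k \<le> Max (range f)" "g k \<le> Max (range g)" for k
    by (rule Max_ge; simp)+
  then show "Max (range (\<lambda>k. max (f k) (g k))) \<le> max (Max (range f)) (Max (range g))"
    by (intro Max.boundedI) (auto intro: max.mono)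
  have "max (f k) (g k) \<le> Max (range (\<lambda>k. max (f k) (g k)))" for k
    by (rule Max_ge) simp_all
  then show "max (Max (range f)) (Max (range g)) \<le> Max (range (\<lambda>k. max (f k) (g k)))"
    by (simp add: max.bounded_iff)
qed

lemma tmult_assoc: "tmult (tmult A B) C = tmult A (tmult B (C::'n::finite tmat))"
proof (intro ext)
  fix i j
  have "tmult (tmult A B) C i j = Max (range (\<lambda>l. Max (range (\<lambda>k. A i k + B k l + C l j))))"
    by (simp add: tmult_def Max_range_add_right)
  also have "\<dots> = Max (range (\<lambda>k. Max (range (\<lambda>l. A i k + B k l + C l j))))"
    by (rule Max_range_swap[symmetric])
  also have "\<dots> = tmult A (tmult B C) i j"
    by (simp add: tmult_def Max_range_add_left add.assoc)
  finally show "tmult (tmult A B) C i j = tmult A (tmult B C) i j" .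
qed

definition tmv :: "'n::finite tmat \<Rightarrow> 'n tvec \<Rightarrow> 'n tvec" where
  "tmv A x = (\<lambda>i. Max (range (\<lambda>k. A i k + x k)))"

lemma col_tmult: "col (tmult A B) j = tmv A (col B j)"
  by (simp add: col_def tmult_def tmv_def)

lemma tmat_eq_colI: "(\<And>j. col A j = col B j) \<Longrightarrow> A = B"
  unfolding col_def by (intro ext) meson

lemma tmv_tmult: "tmv (tmult A B) x = tmv A (tmv B (x::'n::finite tvec))"
proof -
  define X :: "'n tmat" where "X = (\<lambda>i j. x i)"
  have col_X: "col X j = x" for j by (simp add: X_def col_def)
  have "col (tmult (tmult A B) X) j = col (tmult A (tmult B X)) j" for j
    by (simp add: tmult_assoc)
  then show ?thesis by (simp add: col_tmult col_X)
qed

lemma tmv_tplus: "tmv A (tplus x y) = tplus (tmv A x) (tmv A y)"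
proof -
  have "(\<lambda>k. A i k + tplus x y k) = (\<lambda>k. max (A i k + x k) (A i k + y k))" for i
    by (simp add: tplus_def fun_eq_iff max_add_distrib_right)
  then show ?thesis by (simp add: tmv_def tplus_def fun_eq_iff Max_range_max)
qed

lemma tmv_tscale: "tmv A (tscale c x) = tscale c (tmv A x)"
  by (simp add: tmv_def tscale_def fun_eq_iff Max_range_add_left add.left_commute)

section \<open>Tropical submodules\<close>

definition tsubmodule :: "'n tvec set \<Rightarrow> bool" where
  "tsubmodule M \<longleftrightarrow> (\<forall>x\<in>M. \<forall>y\<in>M. tplus x y \<in> M) \<and> (\<forall>c. \<forall>x\<in>M. tscale c x \<in> M)"

definition tlinear_on :: "'n tvec set \<Rightarrow> ('n tvec \<Rightarrow> 'm tvec) \<Rightarrow> bool" where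
  "tlinear_on M f \<longleftrightarrow> (\<forall>x\<in>M. \<forall>y\<in>M. f (tplus x y) = tplus (f x) (f y))
     \<and> (\<forall>c. \<forall>x\<in>M. f (tscale c x) = tscale c (f x))"

definition tcomb :: "'k set \<Rightarrow> ('k \<Rightarrow> real) \<Rightarrow> ('k \<Rightarrow> 'n tvec) \<Rightarrow> 'n tvec" where
  "tcomb K c V = (\<lambda>i. Max ((\<lambda>k. c k + V k i) ` K))"

lemma tcomb_singleton: "tcomb {k} c V = tscale (c k) (V k)"
  by (simp add: tcomb_def tscale_def)

lemma tcomb_insert:
  "finite K \<Longrightarrow> K \<noteq> {} \<Longrightarrow> tcomb (insert k K) c V = tplus (tscale (c k) (V k)) (tcomb K c V)"
  by (simp add: tcomb_def tscale_def tplus_def)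

lemma tmv_eq_tcomb: "tmv A x = tcomb UNIV x (col A)"
  by (simp add: tmv_def tcomb_def col_def add.commute)

lemma tcomb_in_tsubmodule:
  assumes "tsubmodule M" "finite K" "K \<noteq> {}" "V ` K \<subseteq> M"
  shows "tcomb K c V \<in> M"
  using assms(2-4)
proof (induction K rule: finite_ne_induct)
  case (singleton k)
  then show ?case using assms(1) by (simp add: tcomb_singleton tsubmodule_def)
next
  case (insert k K)
  then show ?case using assms(1) by (simp add: tcomb_insert tsubmodule_def)
qed

lemma tlinear_on_tcomb:
  assumes "tsubmodule M" "tlinear_on M f" "finite K" "K \<noteq> {}" "V ` K \<subseteq> M"
  shows "f (tcomb K c V) = tcomb K c (f \<circ> V)"
  using assms(3-5)
proof (induction K rule: finite_ne_induct)
  case (singleton k)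
  then show ?case using assms(2) by (simp add: tcomb_singleton tlinear_on_def)
next
  case (insert k K)
  have "tcomb K c V \<in> M" using insert by (intro tcomb_in_tsubmodule[OF assms(1)]) auto
  then show ?case
    using insert assms(1,2) by (simp add: tcomb_insert tsubmodule_def tlinear_on_def)
qed

lemma tscale_tscale: "tscale c (tscale d x) = tscale (c + d) x"
  by (simp add: tscale_def add.assoc)

lemma tscale_tplus: "tscale c (tplus x y) = tplus (tscale c x) (tscale c y)"
  by (simp add: tscale_def tplus_def fun_eq_iff max_add_distrib_right)

lemma tscale_tspan: "x \<in> tspan S \<Longrightarrow> tscale c x \<in> tspan S"
proof (induction x arbitrary: c rule: tspan.induct)
  case (gen x d) then show ?case by (simp add: tscale_tscale tspan.gen)
next
  case (sup x y) then show ?case by (simp add: tscale_tplus tspan.sup)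
qed

lemma tsubmodule_tspan: "tsubmodule (tspan S)"
  by (simp add: tsubmodule_def tspan.sup tscale_tspan)

lemma tsubmodule_colspace: "tsubmodule (colspace E)"
  by (simp add: colspace_def tsubmodule_tspan)

lemma col_in_colspace: "col E k \<in> colspace E"
  using tspan.gen[of "col E k" "range (col E)" 0] by (simp add: colspace_def tscale_def)

lemma tmv_in_colspace: "tmv E x \<in> colspace E"
  unfolding tmv_eq_tcomb
  by (rule tcomb_in_tsubmodule[OF tsubmodule_colspace]) (auto simp: col_in_colspace)

lemma tmv_idem_colspace:
  assumes idem: "tmult E E = E" and x: "x \<in> colspace E"
  shows "tmv E x = x"
  using x unfolding colspace_def
proof (induction x rule: tspan.induct)
  case (gen x c)
  then obtain k where "x = col E k" by auto
  then show ?case by (simp add: tmv_tscale idem flip: col_tmult)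
next
  case (sup x y) then show ?case by (simp add: tmv_tplus)
qed

lemma col_psi: "col (psi E f) j = f (col E j)"
  by (simp add: col_def psi_def)

lemma tlinear_on_colspace_eq_tmv:
  assumes idem: "tmult E E = E" and f: "tlinear_on (colspace E) f" and x: "x \<in> colspace E"
  shows "f x = tmv (psi E f) x"
proof -
  have "f x = f (tcomb UNIV x (col E))" by (simp add: tmv_idem_colspace[OF idem x] flip: tmv_eq_tcomb)
  also have "\<dots> = tcomb UNIV x (f \<circ> col E)"
    by (rule tlinear_on_tcomb[OF tsubmodule_colspace f]) (auto simp: col_in_colspace)
  also have "f \<circ> col E = col (psi E f)" by (simp add: fun_eq_iff col_psi)
  finally show ?thesis by (simp add: tmv_eq_tcomb)
qed

section \<open>Automorphism groups and the H-class of an idempotent\<close>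

lemma tAut_iff: "f \<in> tAut M \<longleftrightarrow> f \<in> Bij M \<and> tlinear_on M f"
  by (auto simp: tAut_def Bij_def tlinear_on_def)

lemma tlinear_on_compose:
  assumes "tsubmodule M" "g \<in> M \<rightarrow> M" "tlinear_on M f" "tlinear_on M g"
  shows "tlinear_on M (compose M f g)"
  using assms by (auto simp: tsubmodule_def tlinear_on_def compose_def Pi_iff)

lemma tlinear_on_restrict_inv_into:
  assumes M: "tsubmodule M" and f: "bij_betw f M M" "tlinear_on M f"
  shows "tlinear_on M (restrict (inv_into M f) M)"
proof -
  let ?g = "inv_into M f"
  have gM: "?g y \<in> M" and fg: "f (?g y) = y" if "y \<in> M" for y
    using that f(1) by (auto simp: bij_betw_def inv_into_into f_inv_into_f)
  have gf: "?g (f x) = x" if "x \<in> M" for x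
    using that f(1) by (simp add: bij_betw_def)
  have "?g (tplus x y) = tplus (?g x) (?g y)" if "x \<in> M" "y \<in> M" for x y
    using gf[of "tplus (?g x) (?g y)"] that gM fg M f(2) by (simp add: tsubmodule_def tlinear_on_def)
  moreover have "?g (tscale c x) = tscale c (?g x)" if "x \<in> M" for c x
    using gf[of "tscale c (?g x)"] that gM fg M f(2) by (simp add: tsubmodule_def tlinear_on_def)
  ultimately show ?thesis
    using M by (simp add: tlinear_on_def tsubmodule_def)
qed

lemma group_AutGroup:
  assumes M: "tsubmodule M"
  shows "group (AutGroup M)"
proof (rule groupI)
  fix f g assume "f \<in> carrier (AutGroup M)" "g \<in> carrier (AutGroup M)"
  then show "f \<otimes>\<^bsub>AutGroup M\<^esub> g \<in> carrier (AutGroup M)"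
    by (simp add: AutGroup_def tAut_iff compose_Bij tlinear_on_compose[OF M] Bij_imp_funcset)
next
  have "tlinear_on M (restrict id M)"
    using M by (simp add: tlinear_on_def tsubmodule_def)
  then show "\<one>\<^bsub>AutGroup M\<^esub> \<in> carrier (AutGroup M)"
    using id_Bij[of M] by (simp add: AutGroup_def tAut_iff restrict_def id_def)
next
  fix f g h assume "h \<in> carrier (AutGroup M)"
  then have "h \<in> M \<rightarrow> M" by (simp add: AutGroup_def tAut_iff Bij_imp_funcset)
  then show "f \<otimes>\<^bsub>AutGroup M\<^esub> g \<otimes>\<^bsub>AutGroup M\<^esub> h = f \<otimes>\<^bsub>AutGroup M\<^esub> (g \<otimes>\<^bsub>AutGroup M\<^esub> h)"
    by (simp add: AutGroup_def compose_assoc)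
next
  fix f assume "f \<in> carrier (AutGroup M)"
  then have f: "f \<in> Bij M" "tlinear_on M f" by (simp_all add: AutGroup_def tAut_iff)
  then show "\<one>\<^bsub>AutGroup M\<^esub> \<otimes>\<^bsub>AutGroup M\<^esub> f = f"
    using Id_compose[of f M M]
    by (simp add: AutGroup_def Bij_imp_funcset Bij_imp_extensional restrict_def id_def)
  have "restrict (inv_into M f) M \<in> tAut M"
    using f M restrict_inv_into_Bij[OF f(1)]
    by (simp add: tAut_iff tlinear_on_restrict_inv_into Bij_def)
  moreover have "compose M (restrict (inv_into M f) M) f = restrict id M"
    using Bij_compose_restrict_eq[OF f(1)] by (simp add: restrict_def id_def)
  ultimately show "\<exists>g\<in>carrier (AutGroup M). g \<otimes>\<^bsub>AutGroup M\<^esub> f = \<one>\<^bsub>AutGroup M\<^esub>"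
    by (auto simp: AutGroup_def)
qed

lemma Hclass_iff:
  assumes idem: "tmult E E = E"
  shows "A \<in> Hclass E \<longleftrightarrow>
    tmult E A = A \<and> tmult A E = A \<and> (\<exists>Y. tmult A Y = E) \<and> (\<exists>Z. tmult Z A = E)"
proof
  assume "A \<in> Hclass E"
  hence R: "(A = E \<or> (\<exists>X. A = tmult E X)) \<and> (E = A \<or> (\<exists>Y. E = tmult A Y))"
    and L: "(A = E \<or> (\<exists>X. A = tmult X E)) \<and> (E = A \<or> (\<exists>Z. E = tmult Z A))"
    by (auto simp: Hclass_def greenH_def greenR_def greenL_def)
  moreover have "tmult E A = A" using R idem by (metis tmult_assoc)
  moreover have "tmult A E = A" using L idem by (metis tmult_assoc)
  ultimately show "tmult E A = A \<and> tmult A E = A \<and> (\<exists>Y. tmult A Y = E) \<and> (\<exists>Z. tmult Z A = E)"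
    by metis
next
  assume "tmult E A = A \<and> tmult A E = A \<and> (\<exists>Y. tmult A Y = E) \<and> (\<exists>Z. tmult Z A = E)"
  then show "A \<in> Hclass E"
    by (auto simp: Hclass_def greenH_def greenR_def greenL_def) metis+
qed

lemma tAut_into: "f \<in> tAut M \<Longrightarrow> x \<in> M \<Longrightarrow> f x \<in> M"
  by (auto simp: tAut_def bij_betw_apply)

lemma tAut_colspace_eq_tmv:
  "tmult E E = E \<Longrightarrow> f \<in> tAut (colspace E) \<Longrightarrow> x \<in> colspace E \<Longrightarrow> f x = tmv (psi E f) x"
  by (rule tlinear_on_colspace_eq_tmv) (simp_all add: tAut_iff)

lemma psi_compose:
  assumes idem: "tmult E E = E" and f: "f \<in> tAut (colspace E)" and g: "g \<in> tAut (colspace E)"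
  shows "psi E (compose (colspace E) f g) = tmult (psi E f) (psi E g)"
proof (rule tmat_eq_colI)
  fix j
  have "col (psi E (compose (colspace E) f g)) j = f (g (col E j))"
    by (simp add: col_psi compose_def col_in_colspace)
  also have "\<dots> = tmv (psi E f) (col (psi E g) j)"
    by (simp add: tAut_colspace_eq_tmv[OF idem f] tAut_into[OF g] col_in_colspace col_psi)
  finally show "col (psi E (compose (colspace E) f g)) j = col (tmult (psi E f) (psi E g)) j"
    by (simp add: col_tmult)
qed

lemma psi_restrict_id: "psi E (restrict id (colspace E)) = E"
  by (rule tmat_eq_colI) (simp add: col_psi col_in_colspace)

lemma psi_in_Hclass:
  assumes idem: "tmult E E = E" and f: "f \<in> tAut (colspace E)"
  shows "psi E f \<in> Hclass E"
proof -
  interpret G: group "AutGroup (colspace E)" by (rule group_AutGroup[OF tsubmodule_colspace])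
  have fG: "f \<in> carrier (AutGroup (colspace E))" using f by (simp add: AutGroup_def)
  define g where "g = inv\<^bsub>AutGroup (colspace E)\<^esub> f"
  have g: "g \<in> tAut (colspace E)" using G.inv_closed[OF fG] by (simp add: g_def AutGroup_def)
  have "compose (colspace E) g f = restrict id (colspace E)"
    "compose (colspace E) f g = restrict id (colspace E)"
    using G.l_inv[OF fG] G.r_inv[OF fG] by (simp_all add: g_def AutGroup_def)
  then have "tmult (psi E g) (psi E f) = E" "tmult (psi E f) (psi E g) = E"
    by (simp_all add: psi_restrict_id flip: psi_compose[OF idem f g] psi_compose[OF idem g f])
  moreover have "tmult E (psi E f) = psi E f"
    by (rule tmat_eq_colI)
      (simp add: col_tmult col_psi tmv_idem_colspace[OF idem] tAut_into[OF f] col_in_colspace)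
  moreover have "tmult (psi E f) E = psi E f"
    by (rule tmat_eq_colI) (simp add: col_tmult col_psi tAut_colspace_eq_tmv[OF idem f] col_in_colspace)
  ultimately show ?thesis unfolding Hclass_iff[OF idem] by blast
qed

text \<open>The one-sided inverses \<open>Z A = E = A Y\<close> provide a left inverse \<open>x \<mapsto> Z x\<close> of
  \<open>x \<mapsto> A x\<close> on \<open>C(E)\<close> and a preimage \<open>E Y z\<close> of each \<open>z \<in> C(E)\<close>.\<close>
lemma restrict_tmv_in_tAut:
  assumes idem: "tmult E E = E" and A: "A \<in> Hclass E"
  shows "restrict (tmv A) (colspace E) \<in> tAut (colspace E)"
proof -
  obtain Y Z where a: "tmult E A = A" "tmult A E = A" "tmult A Y = E" "tmult Z A = E"
    using A by (auto simp: Hclass_iff[OF idem])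
  let ?M = "colspace E"
  have into: "tmv A x \<in> ?M" for x
    using tmv_in_colspace[of E "tmv A x"] by (simp add: a(1) flip: tmv_tmult)
  have "inj_on (tmv A) ?M"
  proof (rule inj_on_inverseI)
    show "tmv Z (tmv A x) = x" if "x \<in> ?M" for x
      using that by (simp add: a(4) tmv_idem_colspace[OF idem] flip: tmv_tmult)
  qed
  moreover have "z \<in> tmv A ` ?M" if "z \<in> ?M" for z
  proof -
    have "z = tmv (tmult (tmult A E) Y) z" using tmv_idem_colspace[OF idem that] by (simp add: a(2,3))
    then have "z = tmv A (tmv E (tmv Y z))" by (simp add: tmv_tmult)
    then show ?thesis using tmv_in_colspace by blast
  qed
  ultimately have "bij_betw (tmv A) ?M ?M" using into by (auto simp: bij_betw_def)
  then have "restrict (tmv A) ?M \<in> Bij ?M"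
    by (simp add: Bij_def bij_betw_cong[of ?M "restrict (tmv A) ?M" "tmv A"])
  moreover have "tlinear_on ?M (restrict (tmv A) ?M)"
    using tsubmodule_colspace[of E] by (simp add: tlinear_on_def tsubmodule_def tmv_tplus tmv_tscale)
  ultimately show ?thesis by (simp add: tAut_iff)
qed

lemma psi_restrict_tmv:
  assumes "tmult A E = A"
  shows "psi E (restrict (tmv A) (colspace E)) = A"
  by (rule tmat_eq_colI) (simp add: col_psi col_in_colspace assms flip: col_tmult)

lemma psi_iso:
  assumes idem: "tmult E E = E"
  shows "psi E \<in> iso (AutGroup (colspace E)) (HGroup E)"
proof (rule isoI)
  show "psi E \<in> hom (AutGroup (colspace E)) (HGroup E)"
    by (rule homI) (simp_all add: AutGroup_def HGroup_def psi_in_Hclass[OF idem] psi_compose[OF idem])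
  have "inj_on (psi E) (tAut (colspace E))"
  proof (rule inj_onI)
    fix f g assume f: "f \<in> tAut (colspace E)" and g: "g \<in> tAut (colspace E)" and "psi E f = psi E g"
    then have "f x = g x" if "x \<in> colspace E" for x
      using that by (simp add: tAut_colspace_eq_tmv[OF idem])
    then show "f = g" using f g by (auto simp: tAut_def intro: extensionalityI)
  qed
  moreover have "A \<in> psi E ` tAut (colspace E)" if A: "A \<in> Hclass E" for A
  proof (rule image_eqI)
    show "A = psi E (restrict (tmv A) (colspace E))"
      using A by (simp add: psi_restrict_tmv Hclass_iff[OF idem])
  qed (rule restrict_tmv_in_tAut[OF idem A])
  ultimately show "bij_betw (psi E) (carrier (AutGroup (colspace E))) (carrier (HGroup E))"
    using psi_in_Hclass[OF idem] by (auto simp: bij_betw_def AutGroup_def HGroup_def)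
qed

lemma group_HGroup:
  assumes idem: "tmult E E = E"
  shows "group (HGroup E)"
proof -
  interpret G: group "AutGroup (colspace E)" by (rule group_AutGroup[OF tsubmodule_colspace])
  have onto: "psi E ` tAut (colspace E) = Hclass E"
    using psi_iso[OF idem] by (simp add: iso_def bij_betw_def AutGroup_def HGroup_def)
  have closed: "tmult A B \<in> Hclass E" if "A \<in> Hclass E" "B \<in> Hclass E" for A B
  proof -
    from that obtain f g where fg: "f \<in> tAut (colspace E)" "g \<in> tAut (colspace E)"
      and "A = psi E f" "B = psi E g"
      unfolding onto[symmetric] by (elim imageE)
    then have "tmult A B = psi E (compose (colspace E) f g)" by (simp add: psi_compose[OF idem])
    moreover have "compose (colspace E) f g \<in> tAut (colspace E)"
      using G.m_closed fg by (simp add: AutGroup_def)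
    ultimately show ?thesis by (simp add: psi_in_Hclass[OF idem])
  qed
  have one: "E \<in> Hclass E"
    unfolding Hclass_iff[OF idem] using idem by blast
  have unit: "tmult E A = A \<and> tmult A E = A" if "A \<in> Hclass E" for A
    using that unfolding Hclass_iff[OF idem] by blast
  have "monoid (HGroup E)"
    by (rule monoidI) (simp_all add: HGroup_def closed one unit tmult_assoc)
  moreover have "AutGroup (colspace E) \<cong> HGroup E"
    by (rule is_isoI[OF psi_iso[OF idem]])
  ultimately show ?thesis by (rule G.iso_imp_group[rotated])
qed

section \<open>The row space\<close>

lemma anti_iso_inv_iso:
  assumes G: "group G" and H: "group H" and bij: "bij_betw \<phi> (carrier G) (carrier H)"
    and anti: "\<And>x y. x \<in> carrier G \<Longrightarrow> y \<in> carrier G \<Longrightarrow> \<phi> (x \<otimes>\<^bsub>G\<^esub> y) = \<phi> y \<otimes>\<^bsub>H\<^esub> \<phi> x"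
  shows "(\<lambda>x. inv\<^bsub>H\<^esub> \<phi> x) \<in> iso G H"
proof (rule isoI)
  interpret G: group G by (rule G)
  interpret H: group H by (rule H)
  have \<phi>: "\<phi> x \<in> carrier H" if "x \<in> carrier G" for x
    using bij that by (rule bij_betw_apply)
  show "(\<lambda>x. inv\<^bsub>H\<^esub> \<phi> x) \<in> hom G H"
    by (rule homI) (simp_all add: \<phi> anti H.inv_mult_group)
  have "bij_betw (m_inv H) (carrier H) (carrier H)"
    by (rule bij_betw_byWitness[where f' = "m_inv H"]) auto
  then show "bij_betw (\<lambda>x. inv\<^bsub>H\<^esub> \<phi> x) (carrier G) (carrier H)"
    using bij_betw_trans[OF bij] by (simp add: comp_def)
qed

definition ttranspose :: "'n tmat \<Rightarrow> 'n tmat" where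
  "ttranspose A = (\<lambda>i j. A j i)"

lemma ttranspose_ttranspose [simp]: "ttranspose (ttranspose A) = A"
  by (simp add: ttranspose_def)

lemma ttranspose_tmult: "ttranspose (tmult A B) = tmult (ttranspose B) (ttranspose A)"
  by (simp add: tmult_def ttranspose_def add.commute)

lemma ttranspose_idem: "tmult E E = E \<Longrightarrow> tmult (ttranspose E) (ttranspose E) = ttranspose E"
  by (simp flip: ttranspose_tmult)

lemma rowspace_eq_colspace_ttranspose: "rowspace E = colspace (ttranspose E)"
proof -
  have "row E = col (ttranspose E)" by (simp add: fun_eq_iff row_def col_def ttranspose_def)
  then show ?thesis by (simp add: rowspace_def colspace_def)
qed

lemma Hclass_ttranspose:
  assumes idem: "tmult E E = E" and A: "A \<in> Hclass E"
  shows "ttranspose A \<in> Hclass (ttranspose E)"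
proof -
  obtain Y Z where "tmult E A = A" "tmult A E = A" "tmult A Y = E" "tmult Z A = E"
    using A unfolding Hclass_iff[OF idem] by blast
  then have "tmult (ttranspose E) (ttranspose A) = ttranspose A"
    "tmult (ttranspose A) (ttranspose E) = ttranspose A"
    "tmult (ttranspose A) (ttranspose Z) = ttranspose E"
    "tmult (ttranspose Y) (ttranspose A) = ttranspose E"
    by (simp_all flip: ttranspose_tmult)
  then show ?thesis unfolding Hclass_iff[OF ttranspose_idem[OF idem]] by blast
qed

lemma bij_betw_ttranspose_Hclass:
  assumes idem: "tmult E E = E"
  shows "bij_betw ttranspose (Hclass E) (Hclass (ttranspose E))"
proof (rule bij_betw_byWitness[where f' = ttranspose])
  show "ttranspose ` Hclass E \<subseteq> Hclass (ttranspose E)"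
    using Hclass_ttranspose[OF idem] by blast
  show "ttranspose ` Hclass (ttranspose E) \<subseteq> Hclass E"
    using Hclass_ttranspose[OF ttranspose_idem[OF idem]] by fastforce
qed simp_all

text \<open>Transposition reverses products, so it is composed with inversion.\<close>
lemma rowspace_AutGroup_iso:
  assumes idem: "tmult E E = E"
  shows "\<exists>\<phi>. \<phi> \<in> iso (AutGroup (rowspace E)) (HGroup E)"
proof -
  note idem' = ttranspose_idem[OF idem]
  have "(\<lambda>B. inv\<^bsub>HGroup E\<^esub> ttranspose B) \<in> iso (HGroup (ttranspose E)) (HGroup E)"
  proof (rule anti_iso_inv_iso[OF group_HGroup[OF idem'] group_HGroup[OF idem]])
    show "bij_betw ttranspose (carrier (HGroup (ttranspose E))) (carrier (HGroup E))"
      using bij_betw_ttranspose_Hclass[OF idem'] by (simp add: HGroup_def)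
  qed (simp add: HGroup_def ttranspose_tmult)
  then show ?thesis
    using psi_iso[OF idem'] iso_set_trans unfolding rowspace_eq_colspace_ttranspose
    by blast
qed

theorem theorem3p4:
  fixes E :: "'n::finite tmat"
  assumes "tmult E E = E"
  shows "psi E \<in> tAut (colspace E) \<rightarrow> Hclass E
    \<and> group (AutGroup (colspace E)) \<and> group (HGroup E)
    \<and> psi E \<in> iso (AutGroup (colspace E)) (HGroup E)
    \<and> (\<exists>\<phi>. \<phi> \<in> iso (AutGroup (rowspace E)) (HGroup E))"
  using psi_in_Hclass[OF assms] group_AutGroup[OF tsubmodule_colspace] group_HGroup[OF assms]
    psi_iso[OF assms] rowspace_AutGroup_iso[OF assms]
  by blast

end
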